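(* Let $a\in\mathbb{C}$, let $v=\{v_n\}_{n=1}^\infty\in\ell^1(\mathbb{N})$ be complex and $V=\mathrm{diag}(v_1,v_2,\dots)$. Then \[ \sigma_{\mathrm p}(J_a+V)\subset\{\pm2\}\cup\Big\{k+k^{-1}\ \Big|\ 0<|k|<1,\ |k^{-1}-k|\,|1-ak|\le\big(|1-ak|+|k-a|\big)\|v\|_{\ell^1}\Big\}. \]
   Context: $\mathbb{N}=\{1,2,\dots\}$. For $a\in\mathbb{C}$, $J_a$ is the operator on $\ell^2(\mathbb{N})$ with $(J_a\psi)_1=a\psi_1+\psi_2$ and $(J_a\psi)_n=\psi_{n-1}+\psi_{n+1}$ for $n\ge2$. $\sigma_{\mathrm p}$ denotes the set of eigenvalues. *)

theory Defs
  imports Complex_Main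
begin

text \<open>Sequences on \<open>\<nat> = {1,2,...}\<close> are represented as functions \<open>nat \<Rightarrow> complex\<close>;
  only the values at indices \<open>n \<ge> 1\<close> are relevant (the value at 0 is ignored).\<close>

definition in_ell2 :: "(nat \<Rightarrow> complex) \<Rightarrow> bool" where
  "in_ell2 \<psi> \<longleftrightarrow> summable (\<lambda>n. (norm (\<psi> (Suc n)))\<^sup>2)"

definition in_ell1 :: "(nat \<Rightarrow> complex) \<Rightarrow> bool" where
  "in_ell1 v \<longleftrightarrow> summable (\<lambda>n. norm (v (Suc n)))"

definition ell1_norm :: "(nat \<Rightarrow> complex) \<Rightarrow> real" where
  "ell1_norm v = (\<Sum>n. norm (v (Suc n)))"

definition JV_apply :: "complex \<Rightarrow> (nat \<Rightarrow> complex) \<Rightarrow> (nat \<Rightarrow> complex) \<Rightarrow> nat \<Rightarrow> complex" where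
  "JV_apply a v \<psi> n =
     (if n = 1 then a * \<psi> 1 + \<psi> 2 else \<psi> (n - 1) + \<psi> (n + 1)) + v n * \<psi> n"

definition point_spectrum_JV :: "complex \<Rightarrow> (nat \<Rightarrow> complex) \<Rightarrow> complex set" where
  "point_spectrum_JV a v =
     {z. \<exists>\<psi>. in_ell2 \<psi> \<and> (\<exists>n\<ge>1. \<psi> n \<noteq> 0) \<and> (\<forall>n\<ge>1. JV_apply a v \<psi> n = z * \<psi> n)}"

end

theory Submission
  imports Defs
begin

text \<open>Write the spectral parameter as \<open>z = k + 1/k\<close> with \<open>|k| \<le> 1\<close>. Then \<open>k\<^sup>n\<close> and \<open>k\<^sup>-\<^sup>n\<close>
  solve the free recurrence, and the Wronskian of an eigenvector \<open>\<psi>\<close> against a free solution \<open>f\<close>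
  changes by \<open>v\<^sub>n f\<^sub>n \<psi>\<^sub>n\<close> at step \<open>n\<close>; as \<open>\<psi>\<close> decays, the Wronskian against the bounded
  solution \<open>k\<^sup>n\<close> is a tail of \<open>\<Sum> v\<^sub>j k\<^sup>j \<psi>\<^sub>j\<close>, while against \<open>k\<^sup>-\<^sup>n\<close> it differs from its initial
  value by a finite sum. Since \<open>(k\<^sup>-\<^sup>1 - k) \<psi>\<^sub>n\<close> is a combination of the two Wronskians, evaluating
  at an index where \<open>|\<psi>\<^sub>n|\<close> is maximal bounds \<open>|k\<^sup>-\<^sup>1 - k|\<close> by \<open>\<ell>\<^sup>1\<close> norms of \<open>v\<close>. For
  \<open>|k| = 1\<close>, \<open>k \<noteq> \<plusminus>1\<close>, only a tail of \<open>v\<close> enters, which is too small, so \<open>\<psi>\<close> vanishes eventually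
  and hence everywhere. For \<open>|k| < 1\<close> the initial Wronskians are evaluated through the boundary
  condition \<open>\<psi>\<^sub>0 = a \<psi>\<^sub>1\<close>, which produces the factors \<open>1 - a k\<close> and \<open>k - a\<close>.\<close>

definition wronskian :: "(nat \<Rightarrow> 'a::comm_ring) \<Rightarrow> (nat \<Rightarrow> 'a) \<Rightarrow> nat \<Rightarrow> 'a" where
  "wronskian f g n = f n * g (Suc n) - f (Suc n) * g n"

definition ell1_tail :: "(nat \<Rightarrow> complex) \<Rightarrow> nat \<Rightarrow> real" where
  "ell1_tail v n = (\<Sum>j. norm (v (Suc (j + n))))"

lemma ell1_tail_0 [simp]: "ell1_tail v 0 = ell1_norm v"
  by (simp add: ell1_tail_def ell1_norm_def)

lemma summable_ell1_tail:
  "in_ell1 v \<Longrightarrow> summable (\<lambda>j. norm (v (Suc (j + n))))"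
  using summable_ignore_initial_segment[of "\<lambda>j. norm (v (Suc j))" n] by (simp add: in_ell1_def)

lemma ell1_tail_nonneg: "in_ell1 v \<Longrightarrow> 0 \<le> ell1_tail v n"
  unfolding ell1_tail_def by (intro suminf_nonneg summable_ell1_tail) auto

lemma ell1_tail_add_head:
  "in_ell1 v \<Longrightarrow> ell1_tail v n + (\<Sum>j<n. norm (v (Suc j))) = ell1_norm v"
  using suminf_split_initial_segment[of "\<lambda>j. norm (v (Suc j))" n]
  by (simp add: in_ell1_def ell1_tail_def ell1_norm_def)

lemma eventually_ell1_tail_less:
  assumes "in_ell1 v" "0 < r"
  obtains N where "\<And>n. N \<le> n \<Longrightarrow> ell1_tail v n < r"
proof -
  obtain N where "\<forall>n\<ge>N. norm (ell1_tail v n) < r"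
    using suminf_exist_split[OF assms(2), of "\<lambda>j. norm (v (Suc j))"] assms(1)
    by (auto simp: in_ell1_def ell1_tail_def)
  then show thesis
    using that ell1_tail_nonneg[OF assms(1)] by auto
qed

lemma power_free_solution:
  fixes w :: "'a::field"
  assumes "w \<noteq> 0"
  shows "w ^ n + w ^ Suc (Suc n) = (w + inverse w) * w ^ Suc n"
  using assms by (simp add: field_simps)

lemma wronskian_powers_reconstruction:
  fixes k :: "'a::field"
  assumes "k \<noteq> 0"
  shows "(inverse k - k) * g n
    = inverse k ^ n * wronskian (\<lambda>m. k ^ m) g n - k ^ n * wronskian (\<lambda>m. inverse k ^ m) g n"
proof -
  have "inverse k ^ n * k ^ n = 1"
    using assms by (simp add: power_mult_distrib[symmetric])
  then show ?thesis
    by (simp add: wronskian_def algebra_simps)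
qed

lemma wronskian_powers_boundary_reconstruction:
  fixes k :: "'a::field"
  assumes "k \<noteq> 0" "g 0 = a * g 1" "1 \<le> n"
  defines "W w \<equiv> wronskian (\<lambda>m. w ^ m) g"
  shows "(1 - a * k) * ((inverse k - k) * g n)
    = (1 - a * k) * (inverse k ^ n * W k n - k ^ n * (W (inverse k) n - W (inverse k) 0))
      - k ^ (n - 1) * (k - a) * W k 0"
proof -
  obtain n' where "n = Suc n'"
    using assms(3) by (cases n) auto
  then have "(1 - a * k) * (k ^ n * W (inverse k) 0) = k ^ (n - 1) * (k - a) * W k 0"
    using assms(1,2) by (simp add: W_def wronskian_def field_simps)
  moreover have "(inverse k - k) * g n
      = inverse k ^ n * W k n - k ^ n * (W (inverse k) n - W (inverse k) 0) - k ^ n * W (inverse k) 0"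
    using wronskian_powers_reconstruction[OF assms(1), of g n] by (simp add: W_def algebra_simps)
  ultimately show ?thesis
    by (simp add: right_diff_distrib)
qed

lemma joukowski_preimage_in_unit_disc:
  fixes z :: complex
  obtains k where "k \<noteq> 0" "norm k \<le> 1" "z = k + inverse k"
proof -
  define s where "s = csqrt (z\<^sup>2 - 4)"
  define k where "k = (z + s) / 2"
  define k' where "k' = (z - s) / 2"
  have "s * s = z * z - 4"
    unfolding s_def power2_eq_square[symmetric] by simp
  then have "k * k' = 1" "z = k + k'"
    by (simp_all add: k_def k'_def field_simps power2_eq_square)
  then have "k \<noteq> 0" "k' \<noteq> 0" "inverse k = k'" "inverse k' = k"
    by (auto intro: inverse_unique simp: mult.commute)
  moreover have "norm k \<le> 1 \<or> norm k' \<le> 1"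
  proof -
    have "norm k' = inverse (norm k)"
      using \<open>inverse k = k'\<close> norm_inverse by metis
    then show ?thesis by (auto simp: inverse_le_1_iff)
  qed
  ultimately show thesis
    using that \<open>z = k + k'\<close> by (metis add.commute)
qed

lemma null_sequence_attains_max_norm:
  fixes f :: "nat \<Rightarrow> 'a::real_normed_vector"
  assumes "f \<longlonglongrightarrow> 0" "L \<le> m0" "f m0 \<noteq> 0"
  obtains n where "L \<le> n" "\<And>m. L \<le> m \<Longrightarrow> norm (f m) \<le> norm (f n)"
proof -
  have "(\<lambda>m. norm (f m)) \<longlonglongrightarrow> 0"
    using assms(1) by (rule tendsto_norm_zero)
  then have "eventually (\<lambda>m. norm (f m) < norm (f m0)) sequentially"
    using assms(3) by (intro order_tendstoD(2)) auto
  then obtain N where N: "\<And>m. N \<le> m \<Longrightarrow> norm (f m) < norm (f m0)"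
    by (auto simp: eventually_sequentially)
  define A where "A = {L..max N m0}"
  have "m0 \<in> A" using assms(2) by (simp add: A_def)
  have fin: "finite ((\<lambda>m. norm (f m)) ` A)" by (simp add: A_def)
  obtain n where "n \<in> A" and n_Max: "norm (f n) = Max ((\<lambda>m. norm (f m)) ` A)"
    using Max_in[OF fin] \<open>m0 \<in> A\<close> by fastforce
  then have n_max: "\<And>m. m \<in> A \<Longrightarrow> norm (f m) \<le> norm (f n)"
    using Max_ge[OF fin] by simp
  show thesis
  proof
    show "L \<le> n" using \<open>n \<in> A\<close> by (simp add: A_def)
    fix m assume "L \<le> m"
    show "norm (f m) \<le> norm (f n)"
    proof (cases "m \<in> A")
      case False
      then have "norm (f m) < norm (f m0)" using N \<open>L \<le> m\<close> by (simp add: A_def)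
      then show ?thesis using n_max[OF \<open>m0 \<in> A\<close>] by simp
    qed (rule n_max)
  qed
qed

locale eigen_recurrence =
  fixes v p :: "nat \<Rightarrow> complex" and z :: complex
  assumes recurrence: "p n + p (Suc (Suc n)) = (z - v (Suc n)) * p (Suc n)"
begin

lemma zero_if_eventually_zero:
  assumes "eventually (\<lambda>n. p n = 0) sequentially"
  shows "p n = 0"
proof -
  obtain N where N: "\<And>m. N \<le> m \<Longrightarrow> p m = 0"
    using assms by (auto simp: eventually_sequentially)
  have "p m = 0" if "N \<le> m + d" for d m
    using that
  proof (induction d arbitrary: m)
    case 0
    then show ?case by (simp add: N)
  next
    case (Suc d)
    then have "p (Suc m) = 0" "p (Suc (Suc m)) = 0" by (simp_all add: Suc.IH)
    then show ?case using recurrence[of m] by simp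
  qed
  from this[of n N] show ?thesis by simp
qed

context
  fixes f :: "nat \<Rightarrow> complex"
  assumes free: "\<And>n. f n + f (Suc (Suc n)) = z * f (Suc n)"
begin

lemma wronskian_Suc:
  "wronskian f p (Suc n) = wronskian f p n - v (Suc n) * f (Suc n) * p (Suc n)"
proof -
  have "wronskian f p (Suc n) - wronskian f p n
      = f (Suc n) * (p n + p (Suc (Suc n))) - p (Suc n) * (f n + f (Suc (Suc n)))"
    by (simp add: wronskian_def algebra_simps)
  also have "\<dots> = - v (Suc n) * f (Suc n) * p (Suc n)"
    by (simp add: recurrence free algebra_simps)
  finally show ?thesis by (simp add: algebra_simps)
qed

lemma wronskian_add:
  "wronskian f p (n + m)
    = wronskian f p n - (\<Sum>j<m. v (Suc (j + n)) * f (Suc (j + n)) * p (Suc (j + n)))"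
  by (induction m) (simp_all add: wronskian_Suc add.commute)

lemma wronskian_sums:
  assumes "Bseq f" "p \<longlonglongrightarrow> 0"
  shows "(\<lambda>j. v (Suc (j + n)) * f (Suc (j + n)) * p (Suc (j + n))) sums wronskian f p n"
proof -
  have "Zfun p sequentially" "Zfun (\<lambda>m. p (Suc m)) sequentially"
    using assms(2) LIMSEQ_Suc[OF assms(2)] by (simp_all add: tendsto_Zfun_iff)
  moreover have "Bfun f sequentially" "Bfun (\<lambda>m. f (Suc m)) sequentially"
    using assms(1) Bseq_Suc_iff[of f] by simp_all
  ultimately have "Zfun (\<lambda>m. f m * p (Suc m) - f (Suc m) * p m) sequentially"
    by (intro Zfun_diff bounded_bilinear.Bfun_prod_Zfun[OF bounded_bilinear_mult])
  then have "wronskian f p \<longlonglongrightarrow> 0"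
    by (simp add: tendsto_Zfun_iff wronskian_def)
  then have "(\<lambda>m. wronskian f p (n + m)) \<longlonglongrightarrow> 0"
    using LIMSEQ_ignore_initial_segment[of _ 0 n] by (simp add: add.commute)
  from tendsto_diff[OF tendsto_const this]
  have "(\<lambda>m. wronskian f p n - wronskian f p (n + m)) \<longlonglongrightarrow> wronskian f p n"
    by simp
  then show ?thesis
    by (simp add: sums_def wronskian_add)
qed

end

lemma norm_power_mult_wronskian_inverse_diff_le:
  assumes "w \<noteq> 0" "z = w + inverse w" "norm w \<le> 1"
    and "\<And>m. 0 < m \<Longrightarrow> m \<le> n \<Longrightarrow> norm (p m) \<le> M"
  shows "norm (w ^ n * (wronskian (\<lambda>m. inverse w ^ m) p n - wronskian (\<lambda>m. inverse w ^ m) p 0))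
    \<le> M * (\<Sum>j<n. norm (v (Suc j)))"
proof -
  have free: "inverse w ^ m + inverse w ^ Suc (Suc m) = z * inverse w ^ Suc m" for m
    using power_free_solution[of "inverse w" m] assms(1,2) by (simp add: add.commute)
  have "w ^ n * (wronskian (\<lambda>m. inverse w ^ m) p n - wronskian (\<lambda>m. inverse w ^ m) p 0)
      = - (\<Sum>j<n. v (Suc j) * (w ^ n * inverse w ^ Suc j) * p (Suc j))"
    using wronskian_add[where f = "\<lambda>m. inverse w ^ m", OF free, of 0 n]
    by (simp add: sum_distrib_left mult_ac)
  also have "norm \<dots> \<le> (\<Sum>j<n. norm (v (Suc j)) * M)"
    unfolding norm_minus_cancel
  proof (intro order_trans[OF norm_sum] sum_mono)
    fix j assume "j \<in> {..<n}"
    then have "w ^ n * inverse w ^ Suc j = w ^ (n - Suc j)"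
      using assms(1) by (simp add: power_diff power_inverse divide_inverse)
    then have "norm (w ^ n * inverse w ^ Suc j) \<le> 1"
      using assms(3) by (simp add: norm_power power_le_one)
    moreover have "norm (p (Suc j)) \<le> M"
      using assms(4) \<open>j \<in> {..<n}\<close> by simp
    ultimately have "norm (w ^ n * inverse w ^ Suc j) * norm (p (Suc j)) \<le> M"
      by (meson mult_left_le_one_le norm_ge_zero order_trans)
    then show "norm (v (Suc j) * (w ^ n * inverse w ^ Suc j) * p (Suc j)) \<le> norm (v (Suc j)) * M"
      by (simp add: norm_mult mult_left_mono mult.assoc)
  qed
  also have "\<dots> = M * (\<Sum>j<n. norm (v (Suc j)))"
    by (simp add: sum_distrib_left mult.commute)
  finally show ?thesis .
qed

end

locale decaying_eigen_recurrence = eigen_recurrence +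
  assumes ell1: "in_ell1 v" and decay: "p \<longlonglongrightarrow> 0"
begin

lemma norm_wronskian_power_le:
  assumes "w \<noteq> 0" "z = w + inverse w" "norm w \<le> 1" "\<And>m. n < m \<Longrightarrow> norm (p m) \<le> M"
  shows "norm (wronskian (\<lambda>m. w ^ m) p n) \<le> norm w ^ n * (M * ell1_tail v n)"
proof -
  have free: "w ^ m + w ^ Suc (Suc m) = z * w ^ Suc m" for m
    using power_free_solution[OF assms(1)] assms(2) by simp
  have "Bseq (\<lambda>m. w ^ m)"
    using assms(3) by (intro BseqI'[of _ 1]) (simp add: norm_power power_le_one)
  note sums = wronskian_sums[OF free this decay, of n]
  have "(\<lambda>j. norm w ^ n * (M * norm (v (Suc (j + n))))) sums (norm w ^ n * (M * ell1_tail v n))"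
    unfolding ell1_tail_def
    by (intro sums_mult summable_sums summable_ell1_tail ell1)
  moreover have "norm (v (Suc (j + n)) * w ^ Suc (j + n) * p (Suc (j + n)))
      \<le> norm w ^ n * (M * norm (v (Suc (j + n))))" for j
  proof -
    have "norm w ^ Suc (j + n) \<le> norm w ^ n"
      using assms(3) by (intro power_decreasing) auto
    moreover have "norm (p (Suc (j + n))) \<le> M"
      using assms(4) by simp
    ultimately have "norm w ^ Suc (j + n) * norm (p (Suc (j + n))) \<le> norm w ^ n * M"
      by (intro mult_mono) auto
    from mult_right_mono[OF this norm_ge_zero[of "v (Suc (j + n))"]] show ?thesis
      by (simp add: norm_mult norm_power mult_ac)
  qed
  ultimately show ?thesis
    using norm_sums_le[OF sums] by blast
qed

lemma vanishes_if_unimodular: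
  assumes "norm k = 1" "z = k + inverse k" "z \<noteq> 2" "z \<noteq> -2"
  shows "p n = 0"
proof (rule zero_if_eventually_zero)
  define q where "q = inverse k"
  have "k \<noteq> 0" "norm q = 1" "z = q + inverse q"
    using assms(1,2) by (auto simp: q_def norm_inverse)
  have "q \<noteq> k"
  proof
    assume "q = k"
    then have "(k - 1) * (k + 1) = 0"
      using \<open>k \<noteq> 0\<close> by (simp add: q_def field_simps power2_eq_square)
    then show False
      using assms(2-4) \<open>q = k\<close> by (auto simp: q_def add_eq_0_iff2)
  qed
  then obtain N where N: "\<And>n. N \<le> n \<Longrightarrow> ell1_tail v n < norm (q - k) / 2"
    using eventually_ell1_tail_less[OF ell1, of "norm (q - k) / 2"] by auto
  have "p m = 0" if m_ge: "N \<le> m" for m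
  proof (rule ccontr)
    assume "p m \<noteq> 0"
    obtain n where "N \<le> n" and n_max: "\<And>m'. N \<le> m' \<Longrightarrow> norm (p m') \<le> norm (p n)"
      using null_sequence_attains_max_norm[OF decay m_ge \<open>p m \<noteq> 0\<close>] by blast
    define M where "M = norm (p n)"
    have "0 < M"
      using n_max[OF m_ge] zero_less_norm_iff[of "p m"] \<open>p m \<noteq> 0\<close> unfolding M_def by linarith
    have bound: "norm (wronskian (\<lambda>m. w ^ m) p n) \<le> M * ell1_tail v n"
      if "w \<noteq> 0" "z = w + inverse w" "norm w = 1" for w
      using norm_wronskian_power_le[of w n M] that n_max \<open>N \<le> n\<close> by (simp add: M_def)
    have "norm (q - k) * M
        = norm (q ^ n * wronskian (\<lambda>m. k ^ m) p n - k ^ n * wronskian (\<lambda>m. q ^ m) p n)"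
      using arg_cong[OF wronskian_powers_reconstruction[OF \<open>k \<noteq> 0\<close>, of p n], of norm]
      by (simp add: q_def M_def norm_mult)
    also have "\<dots> \<le> norm (wronskian (\<lambda>m. k ^ m) p n) + norm (wronskian (\<lambda>m. q ^ m) p n)"
      using norm_triangle_ineq4[of "q ^ n * wronskian (\<lambda>m. k ^ m) p n"
          "k ^ n * wronskian (\<lambda>m. q ^ m) p n"]
      by (simp add: norm_mult norm_power assms(1) \<open>norm q = 1\<close>)
    also have "\<dots> \<le> 2 * (M * ell1_tail v n)"
      using bound[of k] bound[of q] assms(1,2) \<open>k \<noteq> 0\<close> \<open>norm q = 1\<close> \<open>z = q + inverse q\<close>
      by (auto simp: q_def)
    also have "\<dots> < norm (q - k) * M"
      using N[OF \<open>N \<le> n\<close>] \<open>0 < M\<close> by (simp add: field_simps)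
    finally show False by simp
  qed
  then show "eventually (\<lambda>n. p n = 0) sequentially"
    by (auto simp: eventually_sequentially)
qed

lemma eigenvalue_inequality:
  assumes "k \<noteq> 0" "norm k < 1" "z = k + inverse k" "p 0 = a * p 1" "1 \<le> m" "p m \<noteq> 0"
  shows "norm (inverse k - k) * norm (1 - a * k)
    \<le> (norm (1 - a * k) + norm (k - a)) * ell1_norm v"
proof -
  define W where "W w = wronskian (\<lambda>m. w ^ m) p" for w
  define X where "X n = inverse k ^ n * W k n" for n
  define Y where "Y n = k ^ n * (W (inverse k) n - W (inverse k) 0)" for n
  obtain n where "1 \<le> n" and n_max: "\<And>m'. 1 \<le> m' \<Longrightarrow> norm (p m') \<le> norm (p n)"
    using null_sequence_attains_max_norm[OF decay assms(5,6)] by blast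
  define M where "M = norm (p n)"
  have "0 < M"
    using n_max[OF assms(5)] zero_less_norm_iff[of "p m"] assms(6) unfolding M_def by linarith
  have p_le: "norm (p m') \<le> M" if "0 < m'" for m'
    using n_max that by (simp add: M_def)
  have "norm (X n) = norm (W k n) / norm k ^ n"
    by (simp add: X_def norm_mult norm_power norm_inverse power_inverse divide_inverse mult.commute)
  also have "\<dots> \<le> M * ell1_tail v n"
    using norm_wronskian_power_le[OF assms(1,3)] assms(1,2) p_le
    by (simp add: W_def pos_divide_le_eq mult_ac)
  finally have X_le: "norm (X n) \<le> M * ell1_tail v n" .
  have Y_le: "norm (Y n) \<le> M * (\<Sum>j<n. norm (v (Suc j)))"
    using norm_power_mult_wronskian_inverse_diff_le[OF assms(1,3)] assms(2) p_le
    by (simp add: Y_def W_def)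
  have W0_le: "norm (W k 0) \<le> M * ell1_norm v"
    using norm_wronskian_power_le[OF assms(1,3), of 0 M] assms(2) p_le by (simp add: W_def)
  have "norm (k ^ (n - 1)) \<le> 1"
    using assms(2) by (simp add: norm_power power_le_one)
  have "norm (inverse k - k) * norm (1 - a * k) * M
      = norm ((1 - a * k) * (X n - Y n) - k ^ (n - 1) * (k - a) * W k 0)"
    using arg_cong[OF wronskian_powers_boundary_reconstruction[OF assms(1,4) \<open>1 \<le> n\<close>], of norm]
    by (simp add: X_def Y_def W_def M_def norm_mult mult_ac)
  also have "\<dots> \<le> norm (1 - a * k) * (norm (X n) + norm (Y n))
      + norm (k ^ (n - 1)) * (norm (k - a) * norm (W k 0))"
    by (intro order_trans[OF norm_triangle_ineq4] add_mono)
      (simp_all add: norm_mult mult_left_mono norm_triangle_ineq4)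
  also have "\<dots> \<le> norm (1 - a * k) * (M * ell1_tail v n + M * (\<Sum>j<n. norm (v (Suc j))))
      + 1 * (norm (k - a) * (M * ell1_norm v))"
    using X_le Y_le W0_le \<open>norm (k ^ (n - 1)) \<le> 1\<close>
    by (intro add_mono mult_mono mult_left_mono) auto
  also have "\<dots> = (norm (1 - a * k) + norm (k - a)) * ell1_norm v * M"
    by (simp add: algebra_simps flip: ell1_tail_add_head[OF ell1, of n])
  finally show ?thesis
    using \<open>0 < M\<close> by simp
qed

end

text \<open>Setting \<open>p 0 = a * \<psi> 1\<close> makes the boundary row of \<open>J\<^sub>a\<close> the instance \<open>n = 0\<close> of the recurrence.\<close>

lemma point_spectrum_JV_decaying_recurrence:
  assumes "in_ell1 v" "z \<in> point_spectrum_JV a v"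
  obtains p m where "decaying_eigen_recurrence v p z" "p 0 = a * p 1" "1 \<le> m" "p m \<noteq> 0"
proof -
  obtain \<psi> m where "in_ell2 \<psi>" "1 \<le> m" "\<psi> m \<noteq> 0"
    and eigen: "\<And>n. 1 \<le> n \<Longrightarrow> JV_apply a v \<psi> n = z * \<psi> n"
    using assms(2) unfolding point_spectrum_JV_def by blast
  define p where "p n = (if n = 0 then a * \<psi> 1 else \<psi> n)" for n
  have "p n + p (Suc (Suc n)) = (z - v (Suc n)) * p (Suc n)" for n
    using eigen[of "Suc n"] by (cases n) (auto simp: p_def JV_apply_def algebra_simps numeral_2_eq_2)
  moreover have "p \<longlonglongrightarrow> 0"
  proof -
    have "(\<lambda>n. (norm (\<psi> (Suc n)))\<^sup>2) \<longlonglongrightarrow> 0"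
      using \<open>in_ell2 \<psi>\<close> unfolding in_ell2_def by (rule summable_LIMSEQ_zero)
    then have "(\<lambda>n. norm (p (Suc n))) \<longlonglongrightarrow> 0"
      using tendsto_real_sqrt[of _ 0] by (simp add: p_def)
    then show ?thesis
      by (simp add: filterlim_sequentially_Suc tendsto_norm_zero_iff)
  qed
  ultimately have "decaying_eigen_recurrence v p z"
    using assms(1) by unfold_locales auto
  moreover have "p m \<noteq> 0"
    using \<open>1 \<le> m\<close> \<open>\<psi> m \<noteq> 0\<close> by (simp add: p_def)
  ultimately show thesis
    using that \<open>1 \<le> m\<close> by (simp add: p_def)
qed

theorem corollary3p5:
  fixes a :: complex and v :: "nat \<Rightarrow> complex"
  assumes "in_ell1 v"
  shows "point_spectrum_JV a v \<subseteq>
    {2, -2} \<union> {k + inverse k | k. 0 < norm k \<and> norm k < 1 \<and>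
       norm (inverse k - k) * norm (1 - a * k) \<le> (norm (1 - a * k) + norm (k - a)) * ell1_norm v}"
proof
  fix z assume "z \<in> point_spectrum_JV a v"
  then obtain p m where "decaying_eigen_recurrence v p z" "p 0 = a * p 1" "1 \<le> m" "p m \<noteq> 0"
    using point_spectrum_JV_decaying_recurrence[OF assms] by blast
  then interpret decaying_eigen_recurrence v p z
    by simp
  obtain k where "k \<noteq> 0" "norm k \<le> 1" "z = k + inverse k"
    using joukowski_preimage_in_unit_disc by blast
  show "z \<in> {2, -2} \<union> {k + inverse k | k. 0 < norm k \<and> norm k < 1 \<and>
       norm (inverse k - k) * norm (1 - a * k) \<le> (norm (1 - a * k) + norm (k - a)) * ell1_norm v}"
  proof (cases "z = 2 \<or> z = -2")
    case False
    then have "norm k < 1"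
      using vanishes_if_unimodular[of k m] \<open>norm k \<le> 1\<close> \<open>z = k + inverse k\<close> \<open>p m \<noteq> 0\<close>
      by fastforce
    then show ?thesis
      using eigenvalue_inequality \<open>k \<noteq> 0\<close> \<open>z = k + inverse k\<close> \<open>p 0 = a * p 1\<close>
        \<open>1 \<le> m\<close> \<open>p m \<noteq> 0\<close>
      by auto
  qed auto
qed

end
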